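(* For every ProbNetKAT program $p$, every $n\in\mathbb{N}$ and all $a,b\subseteq\mathsf{Pk}$, \[ \mathcal{B}[\![p^{(n)}]\!]_{a,b} = \sum_{a'\subseteq\mathsf{Pk}} \big(\mathcal{S}[\![p]\!]^{n+1}\big)_{(a,\emptyset),(a',b)}. \]
   Context: $\mathsf{Pk}$ is a finite set of packets (records of finitely many fields with finitely many values). ProbNetKAT programs are built from predicates $\mathsf{false},\mathsf{true}, f=n$, their negations/disjunctions/conjunctions, assignments $f\leftarrow n$, union $p\,\&\,q$, sequencing $p;q$, probabilistic choice $p\oplus_r q$ and iteration $p^*$. $p^{(0)}=\mathsf{true}$, $p^{(n+1)}=\mathsf{true}\,\&\,(p;p^{(n)})$. The matrix semantics $\mathcal{B}[\![p]\!]\in[0,1]^{2^{\mathsf{Pk}}\times 2^{\mathsf{Pk}}}$ ($[\varphi]$ = Iverson bracket): $\mathcal{B}[\![\mathsf{false}]\!]_{ab}=[b=\emptyset]$; $\mathcal{B}[\![\mathsf{true}]\!]_{ab}=[a=b]$; $\mathcal{B}[\![f=n]\!]_{ab}=[b=\{\pi\in a:\pi.f=n\}]$; $\mathcal{B}[\![\neg t]\!]_{ab}=[b\subseteq a]\mathcal{B}[\![t]\!]_{a,a-b}$; $\mathcal{B}[\![f\leftarrow n]\!]_{ab}=[b=\{\pi[f:=n]:\pi\in a\}]$; $\mathcal{B}[\![p\,\&\,q]\!]_{ab}=\sum_{c,d}[c\cup d=b]\mathcal{B}[\![p]\!]_{ac}\mathcal{B}[\![q]\!]_{ad}$; $\mathcal{B}[\![p;q]\!]=\mathcal{B}[\![p]\!]\mathcal{B}[\![q]\!]$;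 $\mathcal{B}[\![p\oplus_r q]\!]=r\mathcal{B}[\![p]\!]+(1-r)\mathcal{B}[\![q]\!]$; $\mathcal{B}[\![p^*]\!]_{ab}=\lim_n\mathcal{B}[\![p^{(n)}]\!]_{ab}$. The small-step matrix on $2^{\mathsf{Pk}}\times2^{\mathsf{Pk}}$ is $\mathcal{S}[\![p]\!]_{(a,b),(a',b')}=[b'=b\cup a]\,\mathcal{B}[\![p]\!]_{a,a'}$; $\mathcal{S}[\![p]\!]^{m}$ is its $m$-th matrix power. *)

theory Defs
  imports Complex_Main
begin

text \<open>Packets: records with fields of finite type 'f and values of finite type 'v.
  The packet set Pk is UNIV :: ('f \<Rightarrow> 'v) set, which is finite.\<close>

type_synonym ('f, 'v) packet = "'f \<Rightarrow> 'v"

datatype ('f, 'v) pred =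
    PFalse
  | PTrue
  | Test 'f 'v
  | Neg "('f, 'v) pred"
  | Disj "('f, 'v) pred" "('f, 'v) pred"
  | Conj "('f, 'v) pred" "('f, 'v) pred"

datatype ('f, 'v) prog =
    Pred "('f, 'v) pred"
  | Assign 'f 'v
  | Union "('f, 'v) prog" "('f, 'v) prog"
  | Seq "('f, 'v) prog" "('f, 'v) prog"
  | Choice "('f, 'v) prog" real "('f, 'v) prog"
  | Star "('f, 'v) prog"

fun wf_prog :: "('f, 'v) prog \<Rightarrow> bool" where
  "wf_prog (Pred t) = True"
| "wf_prog (Assign f n) = True"
| "wf_prog (Union p q) = (wf_prog p \<and> wf_prog q)"
| "wf_prog (Seq p q) = (wf_prog p \<and> wf_prog q)"
| "wf_prog (Choice p r q) = (0 \<le> r \<and> r \<le> 1 \<and> wf_prog p \<and> wf_prog q)"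
| "wf_prog (Star p) = wf_prog p"

fun prog_pow :: "('f, 'v) prog \<Rightarrow> nat \<Rightarrow> ('f, 'v) prog" where
  "prog_pow p 0 = Pred PTrue"
| "prog_pow p (Suc n) = Union (Pred PTrue) (Seq p (prog_pow p n))"

type_synonym 'i mat = "'i \<Rightarrow> 'i \<Rightarrow> real"

definition iv :: "bool \<Rightarrow> real" where
  "iv P = (if P then 1 else 0)"

definition mat_id :: "'i mat" where
  "mat_id x y = iv (x = y)"

definition mat_mult :: "('i::finite) mat \<Rightarrow> 'i mat \<Rightarrow> 'i mat" where
  "mat_mult A B x z = (\<Sum>y\<in>UNIV. A x y * B y z)"

fun mat_pow :: "('i::finite) mat \<Rightarrow> nat \<Rightarrow> 'i mat" where
  "mat_pow A 0 = mat_id"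
| "mat_pow A (Suc n) = mat_mult (mat_pow A n) A"

definition mat_union :: "('p::finite) set mat \<Rightarrow> 'p set mat \<Rightarrow> 'p set mat" where
  "mat_union P Q a b = (\<Sum>c\<in>UNIV. \<Sum>d\<in>UNIV. iv (c \<union> d = b) * P a c * Q a d)"

fun mat_iter :: "('p::finite) set mat \<Rightarrow> nat \<Rightarrow> 'p set mat" where
  "mat_iter M 0 = mat_id"
| "mat_iter M (Suc n) = mat_union mat_id (mat_mult M (mat_iter M n))"

fun predB :: "('f::finite, 'v::finite) pred \<Rightarrow> ('f, 'v) packet set mat" where
  "predB PFalse a b = iv (b = {})"
| "predB PTrue a b = iv (a = b)"
| "predB (Test f n) a b = iv (b = {\<pi> \<in> a. \<pi> f = n})"
| "predB (Neg t) a b = iv (b \<subseteq> a) * predB t a (a - b)"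
| "predB (Disj t u) a b = mat_union (predB t) (predB u) a b"
| "predB (Conj t u) a b = mat_mult (predB t) (predB u) a b"

fun progB :: "('f::finite, 'v::finite) prog \<Rightarrow> ('f, 'v) packet set mat" where
  "progB (Pred t) = predB t"
| "progB (Assign f n) = (\<lambda>a b. iv (b = (\<lambda>\<pi>. \<pi>(f := n)) ` a))"
| "progB (Union p q) = mat_union (progB p) (progB q)"
| "progB (Seq p q) = mat_mult (progB p) (progB q)"
| "progB (Choice p r q) = (\<lambda>a b. r * progB p a b + (1 - r) * progB q a b)"
| "progB (Star p) = (\<lambda>a b. lim (\<lambda>n. mat_iter (progB p) n a b))"

definition smallS :: "('f::finite, 'v::finite) prog \<Rightarrow> (('f, 'v) packet set \<times> ('f, 'v) packet set) mat" where
  "smallS p x y = (case x of (a, b) \<Rightarrow> case y of (a', b') \<Rightarrow> iv (b' = b \<union> a) * progB p a a')"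

end

theory Submission
  imports Defs
begin

text \<open>Started in \<open>(a, c)\<close>, the small-step chain keeps in its second component the union
  of \<open>c\<close> with all packet sets visited so far, and the unfolding
  \<open>p^(n+1) = true & (p ; p^(n))\<close> shows that the big-step iterate accumulates its output in
  exactly the same way; with the accumulator \<open>c\<close> generalised this is an induction on \<open>n\<close>.
  The last small step contributes a full row sum of \<open>B[p]\<close>, so \<open>B[p]\<close> must be stochastic.
  For \<open>p*\<close> this needs the iterates \<open>M^(n)\<close> to converge: the mass that \<open>M^(n)\<close> puts on
  the subsets of a fixed \<open>b\<close> decreases in \<open>n\<close>, and the entry at \<open>b\<close> is that mass minus the
  entries at proper subsets of \<open>b\<close>, which converge by induction on \<open>card b\<close>.\<close>

lemma iv_eq_of_bool: "iv P = of_bool P"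
  by (simp add: iv_def)

lemma iv_conj: "iv (P \<and> Q) = iv P * iv Q"
  by (simp add: iv_def)

lemma sum_iv_eq:
  fixes f :: "'a::finite \<Rightarrow> real"
  shows "(\<Sum>c\<in>UNIV. f c * iv (c = x)) = f x"
    and "(\<Sum>c\<in>UNIV. f c * iv (x = c)) = f x"
    and "(\<Sum>c\<in>UNIV. iv (c = x) * f c) = f x"
    and "(\<Sum>c\<in>UNIV. iv (x = c) * f c) = f x"
  by (simp_all add: iv_eq_of_bool)

lemma iv_nonneg: "0 \<le> iv P"
  by (simp add: iv_def)

lemma mat_mult_assoc: "mat_mult (mat_mult A B) C = mat_mult A (mat_mult B C)"
  by (auto simp: mat_mult_def fun_eq_iff sum_distrib_left sum_distrib_right mult.assoc
           intro: sum.swap)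

lemma mat_mult_id_left: "mat_mult mat_id A = A"
  by (simp add: mat_mult_def mat_id_def fun_eq_iff sum_iv_eq)

lemma mat_mult_id_right: "mat_mult A mat_id = A"
  by (simp add: mat_mult_def mat_id_def fun_eq_iff sum_iv_eq)

lemma mat_pow_Suc_left: "mat_pow A (Suc n) = mat_mult A (mat_pow A n)"
  by (induction n) (simp_all add: mat_mult_id_left mat_mult_id_right mat_mult_assoc)

definition stochastic :: "('i::finite) mat \<Rightarrow> bool" where
  "stochastic M \<longleftrightarrow> (\<forall>a b. 0 \<le> M a b) \<and> (\<forall>a. (\<Sum>b\<in>UNIV. M a b) = 1)"

lemma stochastic_mat_id: "stochastic mat_id"
  by (simp add: stochastic_def mat_id_def iv_def)

lemma stochastic_mat_mult:
  assumes "stochastic A" "stochastic B"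
  shows "stochastic (mat_mult A B)"
proof -
  have "(\<Sum>z\<in>UNIV. mat_mult A B x z) = (\<Sum>y\<in>UNIV. A x y * (\<Sum>z\<in>UNIV. B y z))" for x
    unfolding mat_mult_def sum_distrib_left by (rule sum.swap)
  then show ?thesis
    using assms by (auto simp: stochastic_def mat_mult_def intro!: sum_nonneg)
qed

lemma stochastic_mat_union:
  assumes "stochastic A" "stochastic B"
  shows "stochastic (mat_union A B)"
proof -
  have "(\<Sum>b\<in>UNIV. mat_union A B a b)
      = (\<Sum>c\<in>UNIV. \<Sum>d\<in>UNIV. \<Sum>b\<in>UNIV. iv (c \<union> d = b) * (A a c * B a d))" for a
    unfolding mat_union_def
    by (subst sum.swap, rule sum.cong[OF refl], subst sum.swap) (simp add: mult.assoc)
  also have "\<dots> a = (\<Sum>c\<in>UNIV. A a c) * (\<Sum>d\<in>UNIV. B a d)" for a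
    by (simp add: sum_iv_eq sum_product)
  finally show ?thesis
    using assms by (auto simp: stochastic_def mat_union_def iv_nonneg intro!: sum_nonneg)
qed

lemma stochastic_convex_comb:
  assumes "0 \<le> r" "r \<le> 1" "stochastic A" "stochastic B"
  shows "stochastic (\<lambda>a b. r * A a b + (1 - r) * B a b)"
  using assms
  by (simp add: stochastic_def sum.distrib sum_distrib_left[symmetric])

lemma stochastic_limit:
  assumes "\<And>n. stochastic (A n)" and "\<And>a b. convergent (\<lambda>n. A n a b)"
  shows "stochastic (\<lambda>a b. lim (\<lambda>n. A n a b))"
proof -
  have lim: "(\<lambda>n. A n a b) \<longlonglongrightarrow> lim (\<lambda>n. A n a b)" for a b
    using assms(2) by (simp add: convergent_LIMSEQ_iff)
  have "0 \<le> lim (\<lambda>n. A n a b)" for a b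
    using assms(1) by (intro LIMSEQ_le_const[OF lim]) (auto simp: stochastic_def)
  moreover have "(\<lambda>n. \<Sum>b\<in>UNIV. A n a b) \<longlonglongrightarrow> (\<Sum>b\<in>UNIV. lim (\<lambda>n. A n a b))" for a
    by (intro tendsto_sum lim)
  then have "(\<Sum>b\<in>UNIV. lim (\<lambda>n. A n a b)) = 1" for a
    using assms(1) by (simp add: stochastic_def LIMSEQ_const_iff)
  ultimately show ?thesis
    by (simp add: stochastic_def)
qed

fun pred_set :: "('f, 'v) pred \<Rightarrow> ('f, 'v) packet set" where
  "pred_set PFalse = {}"
| "pred_set PTrue = UNIV"
| "pred_set (Test f n) = {\<pi>. \<pi> f = n}"
| "pred_set (Neg t) = - pred_set t"
| "pred_set (Disj t u) = pred_set t \<union> pred_set u"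
| "pred_set (Conj t u) = pred_set t \<inter> pred_set u"

lemma predB_eq_iv_Int: "predB t a b = iv (b = a \<inter> pred_set t)"
proof (induction t arbitrary: a b)
  case (Neg t)
  then show ?case by (auto simp: iv_def)
next
  case (Disj t u)
  have "mat_union (predB t) (predB u) a b
      = (\<Sum>c\<in>UNIV. \<Sum>d\<in>UNIV. (iv (c \<union> d = b) * iv (c = a \<inter> pred_set t)) * iv (d = a \<inter> pred_set u))"
    by (simp add: mat_union_def Disj.IH)
  also have "\<dots> = iv (a \<inter> pred_set t \<union> a \<inter> pred_set u = b)"
    by (simp add: sum_iv_eq)
  finally show ?case by (auto simp: iv_def)
next
  case (Conj t u)
  have "mat_mult (predB t) (predB u) a b
      = (\<Sum>y\<in>UNIV. iv (b = y \<inter> pred_set u) * iv (y = a \<inter> pred_set t))"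
    by (simp add: mat_mult_def Conj.IH mult.commute)
  also have "\<dots> = iv (b = a \<inter> pred_set t \<inter> pred_set u)"
    by (simp add: sum_iv_eq)
  finally show ?case by (simp add: Int_assoc)
qed (auto simp: iv_def)

lemma stochastic_predB: "stochastic (predB t)"
  by (simp add: stochastic_def predB_eq_iv_Int iv_def)

lemma stochastic_mat_iter: "stochastic M \<Longrightarrow> stochastic (mat_iter M n)"
  by (induction n) (simp_all add: stochastic_mat_id stochastic_mat_union stochastic_mat_mult)

lemma mat_union_mat_id: "mat_union mat_id B a d = (\<Sum>e\<in>UNIV. iv (a \<union> e = d) * B a e)"
proof -
  have "mat_union mat_id B a d = (\<Sum>e\<in>UNIV. \<Sum>c\<in>UNIV. (iv (c \<union> e = d) * B a e) * iv (a = c))"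
    unfolding mat_union_def mat_id_def by (subst sum.swap) (simp add: mult_ac)
  then show ?thesis
    by (simp add: sum_iv_eq)
qed

lemma sum_mat_iter_Suc:
  "(\<Sum>d\<in>UNIV. g d * mat_iter M (Suc n) a d)
     = (\<Sum>y\<in>UNIV. M a y * (\<Sum>e\<in>UNIV. g (a \<union> e) * mat_iter M n y e))"
proof -
  let ?B = "mat_mult M (mat_iter M n)"
  have "(\<Sum>d\<in>UNIV. g d * mat_iter M (Suc n) a d)
      = (\<Sum>e\<in>UNIV. \<Sum>d\<in>UNIV. (g d * ?B a e) * iv (a \<union> e = d))"
    by (subst sum.swap) (simp add: mat_union_mat_id sum_distrib_left mult_ac)
  also have "\<dots> = (\<Sum>e\<in>UNIV. g (a \<union> e) * ?B a e)"
    by (simp add: sum_iv_eq)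
  also have "\<dots> = (\<Sum>e\<in>UNIV. \<Sum>y\<in>UNIV. M a y * (g (a \<union> e) * mat_iter M n y e))"
    by (simp add: mat_mult_def sum_distrib_left mult_ac)
  also have "\<dots> = (\<Sum>y\<in>UNIV. M a y * (\<Sum>e\<in>UNIV. g (a \<union> e) * mat_iter M n y e))"
    by (subst sum.swap) (simp add: sum_distrib_left)
  finally show ?thesis .
qed

definition mass_below :: "('p::finite) set mat \<Rightarrow> nat \<Rightarrow> 'p set mat" where
  "mass_below M n a b = (\<Sum>c\<in>UNIV. iv (c \<subseteq> b) * mat_iter M n a c)"

lemma mass_below_0: "mass_below M 0 a b = iv (a \<subseteq> b)"
  by (simp add: mass_below_def mat_id_def sum_iv_eq)

lemma mass_below_Suc:
  "mass_below M (Suc n) a b = iv (a \<subseteq> b) * (\<Sum>y\<in>UNIV. M a y * mass_below M n y b)"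
  unfolding mass_below_def sum_mat_iter_Suc by (simp add: iv_conj sum_distrib_left mult_ac)

lemma mass_below_nonneg: "stochastic M \<Longrightarrow> 0 \<le> mass_below M n a b"
  using stochastic_mat_iter[of M n]
  by (auto simp: mass_below_def stochastic_def iv_nonneg intro!: sum_nonneg)

lemma mass_below_Suc_le:
  assumes "stochastic M"
  shows "mass_below M (Suc n) a b \<le> mass_below M n a b"
proof (induction n arbitrary: a)
  case 0
  have "(\<Sum>y\<in>UNIV. M a y * iv (y \<subseteq> b)) \<le> (\<Sum>y\<in>UNIV. M a y)"
    using assms by (intro sum_mono) (auto simp: stochastic_def iv_def)
  then show ?case
    using assms by (simp add: mass_below_Suc mass_below_0 stochastic_def iv_def)
next
  case (Suc n)
  have "(\<Sum>y\<in>UNIV. M a y * mass_below M (Suc n) y b) \<le> (\<Sum>y\<in>UNIV. M a y * mass_below M n y b)"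
    using assms Suc by (intro sum_mono mult_left_mono) (auto simp: stochastic_def)
  then show ?case
    by (subst (1 2) mass_below_Suc) (intro mult_left_mono iv_nonneg)
qed

lemma convergent_mass_below:
  assumes "stochastic M"
  shows "convergent (\<lambda>n. mass_below M n a b)"
proof -
  have "decseq (\<lambda>n. mass_below M n a b)"
    using mass_below_Suc_le[OF assms] by (intro decseq_SucI)
  then show ?thesis
    using mass_below_nonneg[OF assms] decseq_convergent by (metis convergent_def)
qed

lemma mass_below_eq_sum_psubset:
  "mass_below M n a b = mat_iter M n a b + (\<Sum>c\<in>{c. c \<subset> b}. mat_iter M n a c)"
proof -
  have "mass_below M n a b = (\<Sum>c\<in>{c. c \<subseteq> b}. mat_iter M n a c)"
    by (simp add: mass_below_def iv_eq_of_bool)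
  also have "{c. c \<subseteq> b} = insert b {c. c \<subset> b}"
    by auto
  finally show ?thesis
    by simp
qed

lemma convergent_mat_iter:
  assumes "stochastic M"
  shows "convergent (\<lambda>n. mat_iter M n a b)"
proof (induction b rule: measure_induct_rule[where f = card])
  case (less b)
  have "convergent (\<lambda>n. \<Sum>c\<in>{c. c \<subset> b}. mat_iter M n a c)"
    by (rule convergent_sum) (auto intro!: less psubset_card_mono)
  then have "convergent (\<lambda>n. mass_below M n a b - (\<Sum>c\<in>{c. c \<subset> b}. mat_iter M n a c))"
    by (intro convergent_diff convergent_mass_below assms)
  then show ?case
    by (simp add: mass_below_eq_sum_psubset)
qed

lemma stochastic_progB: "wf_prog p \<Longrightarrow> stochastic (progB p)"
proof (induction p)
  case (Assign f n)
  show ?case by (simp add: stochastic_def iv_def)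
next
  case (Star p)
  then show ?case
    by (simp add: stochastic_limit stochastic_mat_iter convergent_mat_iter)
qed (simp_all add: stochastic_predB stochastic_mat_union stochastic_mat_mult stochastic_convex_comb)

lemma progB_prog_pow: "progB (prog_pow p n) = mat_iter (progB p) n"
proof -
  have true_id: "predB PTrue = mat_id"
    by (simp add: fun_eq_iff mat_id_def)
  show ?thesis
    by (induction n) (simp_all add: true_id)
qed

lemma sum_smallS_mult:
  "(\<Sum>y\<in>UNIV. smallS p (a, c) y * g y) = (\<Sum>a'\<in>UNIV. progB p a a' * g (a', c \<union> a))"
proof -
  have "(\<Sum>y\<in>UNIV. smallS p (a, c) y * g y)
      = (\<Sum>a'\<in>UNIV. \<Sum>b'\<in>UNIV. (progB p a a' * g (a', b')) * iv (b' = c \<union> a))"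
    by (subst UNIV_Times_UNIV[symmetric], subst sum.cartesian_product')
       (simp add: smallS_def mult_ac)
  then show ?thesis
    by (simp add: sum_iv_eq)
qed

lemma sum_mat_pow_smallS:
  assumes "stochastic (progB p)"
  shows "(\<Sum>a'\<in>UNIV. mat_pow (smallS p) (Suc n) (a, c) (a', b))
           = (\<Sum>d\<in>UNIV. iv (c \<union> d = b) * mat_iter (progB p) n a d)"
proof (induction n arbitrary: a c)
  case 0
  have "(\<Sum>a'\<in>UNIV. mat_pow (smallS p) 1 (a, c) (a', b))
      = (\<Sum>a'\<in>UNIV. progB p a a' * iv (b = c \<union> a))"
    by (simp add: mat_mult_id_left smallS_def mult.commute)
  also have "\<dots> = iv (c \<union> a = b)"
    using assms by (auto simp: stochastic_def iv_def)
  finally show ?case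
    by (simp add: mat_id_def sum_iv_eq)
next
  case (Suc n)
  have "(\<Sum>a'\<in>UNIV. mat_pow (smallS p) (Suc (Suc n)) (a, c) (a', b))
      = (\<Sum>y\<in>UNIV. smallS p (a, c) y * (\<Sum>a'\<in>UNIV. mat_pow (smallS p) (Suc n) y (a', b)))"
    by (simp only: mat_pow_Suc_left[of _ "Suc n"] mat_mult_def sum_distrib_left)
       (rule sum.swap)
  also have "\<dots> = (\<Sum>y\<in>UNIV. progB p a y
                    * (\<Sum>e\<in>UNIV. iv (c \<union> (a \<union> e) = b) * mat_iter (progB p) n y e))"
    by (simp only: sum_smallS_mult Suc.IH Un_assoc)
  also have "\<dots> = (\<Sum>d\<in>UNIV. iv (c \<union> d = b) * mat_iter (progB p) (Suc n) a d)"
    by (rule sum_mat_iter_Suc[symmetric])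
  finally show ?case .
qed

theorem proposition4p2:
  fixes p :: "('f::finite, 'v::finite) prog" and n :: nat and a b :: "('f, 'v) packet set"
  assumes "wf_prog p"
  shows "progB (prog_pow p n) a b = (\<Sum>a'\<in>UNIV. mat_pow (smallS p) (Suc n) (a, {}) (a', b))"
  using sum_mat_pow_smallS[OF stochastic_progB[OF assms], of n a "{}" b]
  by (simp add: progB_prog_pow sum_iv_eq)

end
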